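(* Let $F$ be a field of characteristic $2$ and let $q=\langle a_1,\dots,a_n\rangle$ be a totally singular quadratic form over $F$ with not all $a_i=0$. Let $L/F$ be a finite field extension, $a\in F$, $\lambda\in L\setminus F$ and $K=F(\lambda)$. (i) If $L/F$ is separable and $a\in D_L(q_L)$, then $a\in D_F(q)$. (ii) If $a\in F^*$ and $a\lambda\in D_K(q_K)$, then $K/F$ is separable. (iii) If $a\in F^*$ and $a\lambda\in D_L(q_L)$, then $K/F$ is separable or $L/K$ is inseparable.
   Context: $\langle a_1,\dots,a_n\rangle$ denotes the quadratic form $a_1x_1^2+\dots+a_nx_n^2$. For a quadratic form $q$ on $V$ over a field $E$, $D_E(q)=\{q(x):x\in V\setminus\{0\}\}$, and $q_E$ denotes scalar extension. *)

theory Defs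
  imports "HOL-Computational_Algebra.Polynomial"
begin

text \<open>All fields are subfields of an ambient field of type 'a.\<close>

definition is_subfield :: "'a::field set \<Rightarrow> bool" where
  "is_subfield E \<longleftrightarrow> 0 \<in> E \<and> 1 \<in> E \<and>
     (\<forall>x\<in>E. \<forall>y\<in>E. x + y \<in> E \<and> x - y \<in> E \<and> x * y \<in> E) \<and>
     (\<forall>x\<in>E. x \<noteq> 0 \<longrightarrow> inverse x \<in> E)"

definition finite_ext :: "'a::field set \<Rightarrow> 'a set \<Rightarrow> bool" where
  "finite_ext E F \<longleftrightarrow> is_subfield F \<and> is_subfield E \<and> F \<subseteq> E \<and>
     (\<exists>B. finite B \<and> B \<subseteq> E \<and>
        (\<forall>x\<in>E. \<exists>c. (\<forall>b\<in>B. c b \<in> F) \<and> x = (\<Sum>b\<in>B. c b * b)))"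

definition adjoin :: "'a::field set \<Rightarrow> 'a \<Rightarrow> 'a set" where
  "adjoin F x = \<Inter>{E. is_subfield E \<and> F \<subseteq> E \<and> x \<in> E}"

definition poly_over :: "'a::field set \<Rightarrow> 'a poly \<Rightarrow> bool" where
  "poly_over F p \<longleftrightarrow> (\<forall>i. coeff p i \<in> F)"

definition is_min_poly :: "'a::field set \<Rightarrow> 'a \<Rightarrow> 'a poly \<Rightarrow> bool" where
  "is_min_poly F x p \<longleftrightarrow> poly_over F p \<and> lead_coeff p = 1 \<and> poly p x = 0 \<and>
     (\<forall>q. poly_over F q \<and> q \<noteq> 0 \<and> poly q x = 0 \<longrightarrow> degree p \<le> degree q)"

definition separable_poly :: "'a::field poly \<Rightarrow> bool" where
  "separable_poly p \<longleftrightarrow> coprime p (pderiv p)"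

definition separable_elem :: "'a::field set \<Rightarrow> 'a \<Rightarrow> bool" where
  "separable_elem F x \<longleftrightarrow> (\<exists>p. is_min_poly F x p \<and> separable_poly p)"

definition separable_ext :: "'a::field set \<Rightarrow> 'a set \<Rightarrow> bool" where
  "separable_ext E F \<longleftrightarrow> (\<forall>x\<in>E. separable_elem F x)"

text \<open>Values D_E(q_E) of the totally singular form q = <a_0,...,a_{n-1}>
  (a_0 x_0^2 + ... + a_{n-1} x_{n-1}^2) over E, on nonzero vectors of E^n.\<close>
definition D_ts :: "'a::field set \<Rightarrow> nat \<Rightarrow> (nat \<Rightarrow> 'a) \<Rightarrow> 'a set" where
  "D_ts E n a = {(\<Sum>i<n. a i * (x i)^2) | x. (\<forall>i<n. x i \<in> E) \<and> (\<exists>i<n. x i \<noteq> 0)}"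

end

theory Submission
  imports Defs "HOL-Algebra.Embedded_Algebras"
begin

text \<open>
  In characteristic 2 every value of a totally singular form over E with coefficients in F lies
  in F[E^2], the F-span of the squares of E, which is again a field. An element z of a
  finite extension is separable over F iff z \<in> F(z^2): a separable minimal polynomial
  p = g(X^2) + X h(X^2) has p' = h(X^2), and h(z^2) \<noteq> 0 gives z = g(z^2)/h(z^2);
  conversely, z = r(z^2)/s(z^2) makes z a root of X s(X^2) - r(X^2), whose derivative
  s(X^2) does not vanish at z, so p' \<noteq> 0.
  If E = F[E^2], the squares of an F-basis of E again form a basis. Applied over
  M = F(z^2) to a basis containing z and 1 this shows z \<in> M, so E/F is separable; thus
  E/F is separable iff E = F[E^2].

  (i) For separable L/F choose a basis of L containing 1; writing c = \<Sum> a_i x_i^2 in the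
  basis of squares and comparing coefficients gives a representation of c over F.
  (ii), (iii) c\<lambda> \<in> D(q) puts \<lambda> into F[K^2] resp. F[L^2]; hence K = F[K^2], resp.
  L = K[L^2] = F[L^2] when L/K is separable, and K/F is separable.
\<close>

hide_const (open) up_ring.coeff up_ring.monom module.smult

lemma is_subfield_zero: "is_subfield E \<Longrightarrow> 0 \<in> E"
  and is_subfield_one: "is_subfield E \<Longrightarrow> 1 \<in> E"
  and is_subfield_add: "is_subfield E \<Longrightarrow> x \<in> E \<Longrightarrow> y \<in> E \<Longrightarrow> x + y \<in> E"
  and is_subfield_diff: "is_subfield E \<Longrightarrow> x \<in> E \<Longrightarrow> y \<in> E \<Longrightarrow> x - y \<in> E"
  and is_subfield_mult: "is_subfield E \<Longrightarrow> x \<in> E \<Longrightarrow> y \<in> E \<Longrightarrow> x * y \<in> E"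
  by (auto simp: is_subfield_def)

lemma is_subfield_inverse: "is_subfield E \<Longrightarrow> x \<in> E \<Longrightarrow> inverse x \<in> E"
  by (cases "x = 0") (auto simp: is_subfield_def)

lemma is_subfield_divide: "is_subfield E \<Longrightarrow> x \<in> E \<Longrightarrow> y \<in> E \<Longrightarrow> x / y \<in> E"
  by (simp add: divide_inverse is_subfield_mult is_subfield_inverse)

lemma is_subfield_power: "is_subfield E \<Longrightarrow> x \<in> E \<Longrightarrow> x ^ n \<in> E"
  by (induction n) (auto simp: is_subfield_one is_subfield_mult)

lemma is_subfield_sum: "is_subfield E \<Longrightarrow> (\<And>i. i \<in> A \<Longrightarrow> f i \<in> E) \<Longrightarrow> sum f A \<in> E"
  by (induction A rule: infinite_finite_induct) (auto simp: is_subfield_zero is_subfield_add)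

lemma is_subfield_of_nat: "is_subfield E \<Longrightarrow> of_nat n \<in> E"
  by (induction n) (auto simp: is_subfield_zero is_subfield_one is_subfield_add)

lemma adjoin_is_subfield: "is_subfield (adjoin F x)"
  unfolding adjoin_def is_subfield_def by auto

lemma subset_adjoin: "F \<subseteq> adjoin F x"
  unfolding adjoin_def by auto

lemma adjoin_least: "is_subfield E \<Longrightarrow> F \<subseteq> E \<Longrightarrow> x \<in> E \<Longrightarrow> adjoin F x \<subseteq> E"
  unfolding adjoin_def by auto

lemma poly_in_subfield:
  "is_subfield E \<Longrightarrow> F \<subseteq> E \<Longrightarrow> poly_over F p \<Longrightarrow> x \<in> E \<Longrightarrow> poly p x \<in> E"
  unfolding poly_altdef poly_over_def
  by (intro is_subfield_sum) (auto intro!: is_subfield_mult is_subfield_power)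

context
  fixes F :: "'a::field set"
  assumes F: "is_subfield F"
begin

lemma poly_over_0: "poly_over F 0"
  and poly_over_1: "poly_over F 1"
  using F by (simp_all add: poly_over_def is_subfield_zero is_subfield_one)

lemma poly_over_pCons: "c \<in> F \<Longrightarrow> poly_over F p \<Longrightarrow> poly_over F (pCons c p)"
  using F by (simp add: poly_over_def coeff_pCons split: nat.splits)

lemma poly_over_const: "c \<in> F \<Longrightarrow> poly_over F [:c:]"
  using poly_over_pCons poly_over_0 by simp

lemma poly_over_monom: "c \<in> F \<Longrightarrow> poly_over F (monom c n)"
  using F by (simp add: poly_over_def is_subfield_zero coeff_monom)

lemma poly_over_add: "poly_over F p \<Longrightarrow> poly_over F q \<Longrightarrow> poly_over F (p + q)"
  and poly_over_diff: "poly_over F p \<Longrightarrow> poly_over F q \<Longrightarrow> poly_over F (p - q)"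
  using F by (simp_all add: poly_over_def is_subfield_add is_subfield_diff)

lemma poly_over_smult: "c \<in> F \<Longrightarrow> poly_over F p \<Longrightarrow> poly_over F (smult c p)"
  using F by (simp add: poly_over_def is_subfield_mult)

lemma poly_over_mult: "poly_over F p \<Longrightarrow> poly_over F q \<Longrightarrow> poly_over F (p * q)"
  using F unfolding poly_over_def coeff_mult by (auto intro!: is_subfield_sum is_subfield_mult)

lemma poly_over_pderiv: "poly_over F p \<Longrightarrow> poly_over F (pderiv p)"
  using F unfolding poly_over_def coeff_pderiv
  by (auto intro!: is_subfield_mult is_subfield_of_nat simp del: of_nat_Suc)

lemma poly_over_pcompose: "poly_over F p \<Longrightarrow> poly_over F q \<Longrightarrow> poly_over F (pcompose p q)"
proof (induction p rule: pCons_induct)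
  case (pCons c p)
  then have "poly_over F p" "c \<in> F"
    unfolding poly_over_def by (metis coeff_pCons_Suc, metis coeff_pCons_0)
  with pCons show ?case
    by (simp add: pcompose_pCons poly_over_add poly_over_const poly_over_mult)
qed (simp add: poly_over_0)

lemma poly_over_Poly: "set xs \<subseteq> F \<Longrightarrow> poly_over F (Poly xs)"
  using F by (auto simp: poly_over_def nth_default_def is_subfield_zero subsetD)

lemma poly_over_div_mod:
  assumes q: "poly_over F q" and p: "poly_over F p"
  shows "poly_over F (p div q) \<and> poly_over F (p mod q)"
proof (cases "q = 0")
  case True
  then show ?thesis using p by (simp add: poly_over_0)
next
  case q0: False
  show ?thesis using p
  proof (induction "degree p" arbitrary: p rule: less_induct)
    case less
    show ?case
    proof (cases "degree p < degree q")
      case True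
      then show ?thesis using less(2) by (simp add: div_poly_less mod_poly_less poly_over_0)
    next
      case False
      define c where "c = lead_coeff p / lead_coeff q"
      define m where "m = degree p - degree q"
      define r where "r = p - monom c m * q"
      have cF: "c \<in> F"
        unfolding c_def using less(2) q F by (simp add: poly_over_def is_subfield_divide)
      have rF: "poly_over F r"
        unfolding r_def by (intro poly_over_diff poly_over_mult poly_over_monom less(2) q cF)
      have r: "poly_over F (r div q) \<and> poly_over F (r mod q)"
      proof (cases "r = 0")
        case True then show ?thesis by (simp add: poly_over_0)
      next
        case r0: False
        have "degree (monom c m * q) \<le> degree p"
          using False degree_mult_le[of "monom c m" q] degree_monom_le[of c m]
          unfolding m_def by linarith
        then have "degree r \<le> degree p"
          unfolding r_def by (meson degree_diff_le le_refl)
        moreover have "coeff r (degree p) = 0"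
          unfolding r_def m_def using False q0 by (simp add: coeff_monom_mult c_def)
        ultimately have "degree r < degree p"
          using r0 by (metis leading_coeff_0_iff le_neq_implies_less)
        then show ?thesis using less(1) rF by blast
      qed
      have p_eq: "p = r + monom c m * q" by (simp add: r_def)
      have "p div q = monom c m + r div q" using p_eq q0 by simp
      moreover have "p mod q = r mod q" using p_eq by simp
      ultimately
      show ?thesis using r cF by (simp add: poly_over_add poly_over_monom)
    qed
  qed
qed

text \<open>Bezout over F: the nonzero F-combination of p and q of least degree divides both.\<close>

lemma poly_over_common_divisor:
  assumes p: "poly_over F p" and q: "poly_over F q" and q0: "q \<noteq> 0"
  obtains h where "poly_over F h" "h \<noteq> 0" "h dvd p" "h dvd q"
    "\<And>c. c dvd p \<Longrightarrow> c dvd q \<Longrightarrow> c dvd h"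
proof -
  define I where "I = {u * p + v * q | u v. poly_over F u \<and> poly_over F v}"
  have I_poly_over: "poly_over F g" if "g \<in> I" for g
    using that p q by (auto simp: I_def poly_over_add poly_over_mult)
  have pI: "p \<in> I" and qI: "q \<in> I"
    unfolding I_def using poly_over_0 poly_over_1 by force+
  obtain h where hI: "h \<in> I" and h0: "h \<noteq> 0"
    and hmin: "\<And>g. g \<in> I \<Longrightarrow> g \<noteq> 0 \<Longrightarrow> degree h \<le> degree g"
    using ex_has_least_nat[of "\<lambda>g. g \<in> I \<and> g \<noteq> 0" q degree] qI q0 by blast
  obtain u v where uv: "poly_over F u" "poly_over F v" "h = u * p + v * q"
    using hI unfolding I_def by blast
  have h_dvd: "h dvd g" if gI: "g \<in> I" for g
  proof -
    obtain u' v' where uv': "poly_over F u'" "poly_over F v'" "g = u' * p + v' * q"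
      using gI unfolding I_def by blast
    define k where "k = g div h"
    have kF: "poly_over F k"
      unfolding k_def using poly_over_div_mod[OF I_poly_over[OF hI] I_poly_over[OF gI]] by blast
    have "g mod h = (u' - k * u) * p + (v' - k * v) * q"
      unfolding k_def minus_div_mult_eq_mod[symmetric] uv(3) uv'(3) by (simp add: algebra_simps)
    then have "g mod h \<in> I"
      using uv uv' kF unfolding I_def by (blast intro: poly_over_diff poly_over_mult)
    then have "g mod h = 0"
      using degree_mod_less[OF h0, of g] hmin by force
    then show ?thesis by (simp add: mod_eq_0_iff_dvd)
  qed
  show thesis
  proof
    show "poly_over F h" by (rule I_poly_over[OF hI])
    show "c dvd h" if "c dvd p" "c dvd q" for c
      using that uv(3) by simp
  qed (use h0 h_dvd pI qI in auto)
qed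

end

lemma is_min_poly_nonconstant:
  assumes "is_min_poly F z p" shows "p \<noteq> 0" "degree p \<ge> 1"
proof -
  show p0: "p \<noteq> 0" using assms unfolding is_min_poly_def by auto
  show "degree p \<ge> 1"
  proof (rule ccontr)
    assume "\<not> 1 \<le> degree p"
    then obtain c where "p = [:c:]" by (metis degree_eq_zeroE less_one not_le)
    then show False using assms unfolding is_min_poly_def by auto
  qed
qed

lemma poly_Poly_eq_sum: "poly (Poly xs) (z::'a::field) = (\<Sum>j<length xs. xs!j * z^j)"
  by (induction xs)
    (auto simp: sum.lessThan_Suc_shift sum_distrib_left mult.assoc mult.left_commute
      simp del: sum.lessThan_Suc)

lemma is_min_poly_exists:
  assumes F: "is_subfield F" and "poly_over F q" "q \<noteq> 0" "poly q z = 0"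
  obtains p where "is_min_poly F z p"
proof -
  obtain r where r: "poly_over F r" "r \<noteq> 0" "poly r z = 0"
    and rmin: "\<And>s. poly_over F s \<and> s \<noteq> 0 \<and> poly s z = 0 \<Longrightarrow> degree r \<le> degree s"
    using ex_has_least_nat[of "\<lambda>s. poly_over F s \<and> s \<noteq> 0 \<and> poly s z = 0" q degree] assms(2-4)
    by blast
  define p where "p = smult (inverse (lead_coeff r)) r"
  have "inverse (lead_coeff r) \<in> F"
    using r(1) F unfolding poly_over_def by (simp add: is_subfield_inverse)
  then have "poly_over F p" unfolding p_def by (rule poly_over_smult[OF F _ r(1)])
  moreover have "lead_coeff p = 1" "degree p = degree r" "poly p z = 0"
    using r(2,3) by (simp_all add: p_def)
  ultimately show thesis using rmin by (intro that) (auto simp: is_min_poly_def)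
qed

lemma is_min_poly_dvd:
  assumes F: "is_subfield F" and mp: "is_min_poly F z p"
    and q: "poly_over F q" and qz: "poly q z = 0"
  shows "p dvd q"
proof -
  have pF: "poly_over F p" and pz: "poly p z = 0"
    using mp unfolding is_min_poly_def by auto
  have "poly_over F (q mod p)" using poly_over_div_mod[OF F pF q] by blast
  moreover have "poly (q mod p) z = 0"
    using pz qz by (metis div_mult_mod_eq mult_zero_right add_0 poly_add poly_mult)
  ultimately have "q mod p = 0"
    using degree_mod_less[OF is_min_poly_nonconstant(1)[OF mp], of q] mp
    unfolding is_min_poly_def by force
  then show ?thesis by (simp add: mod_eq_0_iff_dvd)
qed

text \<open>The coprimality in the definition of separability is over the ambient field, but a common
  divisor of least degree can be taken with coefficients in F, where p is irreducible.\<close>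

lemma is_min_poly_coprime:
  assumes F: "is_subfield F" and mp: "is_min_poly F z p"
    and q: "poly_over F q" "q \<noteq> 0" "degree q < degree p"
  shows "coprime p q"
proof -
  have pF: "poly_over F p" and p0: "p \<noteq> 0" and pz: "poly p z = 0"
    and pmin: "\<And>r. poly_over F r \<Longrightarrow> r \<noteq> 0 \<Longrightarrow> poly r z = 0 \<Longrightarrow> degree p \<le> degree r"
    using mp is_min_poly_nonconstant[OF mp] unfolding is_min_poly_def by auto
  obtain h where hF: "poly_over F h" and h0: "h \<noteq> 0" and hp: "h dvd p" and hq: "h dvd q"
    and h_gcd: "\<And>c. c dvd p \<Longrightarrow> c dvd q \<Longrightarrow> c dvd h"
    using poly_over_common_divisor[OF F pF q(1,2)] by blast
  have "degree h = 0"
  proof (cases "poly h z = 0")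
    case True
    then show ?thesis
      using pmin[OF hF h0] dvd_imp_degree_le[OF hq q(2)] q(3) by simp
  next
    case False
    define k where "k = p div h"
    have pk: "p = h * k" unfolding k_def using hp by simp
    have "poly_over F k" unfolding k_def using poly_over_div_mod[OF F hF pF] by blast
    moreover have "k \<noteq> 0" "poly k z = 0" using pk p0 pz False by auto
    ultimately have "degree p \<le> degree k" using pmin by blast
    then show ?thesis using pk p0 degree_mult_eq[OF h0] by (metis add_le_same_cancel2 le_zero_eq mult_not_zero)
  qed
  then have "is_unit h" using h0 is_unit_iff_degree by blast
  then show ?thesis by (meson coprimeI dvd_unit_imp_unit h_gcd)
qed

lemma degree_pderiv_less: "degree p \<ge> 1 \<Longrightarrow> degree (pderiv p) < degree p"
proof -
  assume "degree p \<ge> 1"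
  moreover have "degree (pderiv p) \<le> degree p - 1"
    by (rule degree_le) (simp add: coeff_pderiv coeff_eq_0)
  ultimately show ?thesis by simp
qed

lemma separable_elem_if_pderiv_nonzero:
  assumes F: "is_subfield F" and mp: "is_min_poly F z p" and "pderiv p \<noteq> 0"
  shows "separable_elem F z"
proof -
  have "poly_over F (pderiv p)"
    using mp poly_over_pderiv[OF F] unfolding is_min_poly_def by blast
  then have "coprime p (pderiv p)"
    using assms is_min_poly_coprime degree_pderiv_less is_min_poly_nonconstant(2) by blast
  then show ?thesis using mp unfolding separable_elem_def separable_poly_def by blast
qed

lemma sum_even_odd: "(\<Sum>j<2*(k::nat). f j) = (\<Sum>i<k. f (2*i) + f (2*i+1))"
  by (induction k) (auto simp: mult_2 ac_simps)

lemma poly_eq_sum_lessThan: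
  assumes "degree p < N" shows "poly p (z::'a::field) = (\<Sum>j<N. coeff p j * z^j)"
  unfolding poly_altdef by (rule sum.mono_neutral_left) (use assms in \<open>auto simp: coeff_eq_0\<close>)

section \<open>Characteristic 2\<close>

context
  assumes two: "(2::'a::field) = 0"
begin

lemma char2_uminus: "- (x::'a) = x"
  using two by (metis add_eq_0_iff mult_2 mult_zero_left)

lemma char2_power2_sum: "(\<Sum>i\<in>A. f i :: 'a)^2 = (\<Sum>i\<in>A. (f i)^2)"
  by (induction A rule: infinite_finite_induct) (auto simp: power2_sum two)

lemma char2_of_nat_Suc_double: "(of_nat (Suc (2 * i)) :: 'a) = 1"
  and char2_of_nat_Suc_Suc_double: "(of_nat (Suc (Suc (2 * i))) :: 'a) = 0"
  using two by (simp_all add: of_nat_Suc)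

lemma char2_pderiv_pcompose_X2: "pderiv (pcompose p [:0, 0, 1::'a:]) = 0"
  using two by (simp add: pderiv_pcompose pderiv_pCons)

lemma char2_sum_squares_expand:
  assumes "\<forall>i<n. x i = (\<Sum>j<m. f i j * u j)"
  shows "(\<Sum>i<n. a i * (x i)^2) = (\<Sum>j<m. (\<Sum>i<n. a i * (f i j)^2) * (u j :: 'a)^2)"
proof -
  have "(\<Sum>i<n. a i * (x i)^2) = (\<Sum>i<n. \<Sum>j<m. a i * ((f i j)^2 * (u j)^2))"
    using assms by (simp add: char2_power2_sum power_mult_distrib sum_distrib_left)
  also have "\<dots> = (\<Sum>j<m. (\<Sum>i<n. a i * (f i j)^2) * (u j)^2)"
    by (subst sum.swap) (simp add: sum_distrib_right mult.assoc)
  finally show ?thesis .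
qed

text \<open>In characteristic 2 a polynomial splits as p = g(X^2) + X p', with p' = h(X^2).\<close>

lemma char2_poly_pderiv:
  "poly (pderiv p) (z::'a) = (\<Sum>i<Suc (degree p). coeff p (2*i+1) * (z^i)^2)"
proof -
  have "degree (pderiv p) \<le> degree p"
    by (rule degree_le) (simp add: coeff_pderiv coeff_eq_0)
  then have deg: "degree (pderiv p) < 2 * Suc (degree p)" by simp
  have "poly (pderiv p) z = (\<Sum>i<Suc (degree p). coeff (pderiv p) (2*i) * z^(2*i)
      + coeff (pderiv p) (2*i+1) * z^(2*i+1))"
    by (simp only: poly_eq_sum_lessThan[OF deg] sum_even_odd)
  also have "\<dots> = (\<Sum>i<Suc (degree p). coeff p (2*i+1) * (z^i)^2)"
  proof (intro sum.cong refl)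
    fix i
    show "coeff (pderiv p) (2*i) * z^(2*i) + coeff (pderiv p) (2*i+1) * z^(2*i+1)
        = coeff p (2*i+1) * (z^i)^2"
      unfolding coeff_pderiv power_mult[symmetric] mult.commute[of i 2]
      by (simp add: char2_of_nat_Suc_double char2_of_nat_Suc_Suc_double del: of_nat_Suc)
  qed
  finally show ?thesis .
qed

lemma char2_poly_even_odd:
  "poly p (z::'a) = (\<Sum>i<Suc (degree p). coeff p (2*i) * (z^i)^2) + z * poly (pderiv p) z"
proof -
  have deg: "degree p < 2 * Suc (degree p)" by simp
  have "poly p z = (\<Sum>i<Suc (degree p). coeff p (2*i) * z^(2*i) + coeff p (2*i+1) * z^(2*i+1))"
    by (simp only: poly_eq_sum_lessThan[OF deg] sum_even_odd)
  then show ?thesis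
    unfolding char2_poly_pderiv power_mult[symmetric] mult.commute[of _ 2]
    by (simp add: sum.distrib sum_distrib_left algebra_simps del: sum.lessThan_Suc)
qed

end

section \<open>The field F[E^2]\<close>

inductive_set square_span :: "'a::field set \<Rightarrow> 'a set \<Rightarrow> 'a set" for F E where
  zero: "0 \<in> square_span F E"
| add_square: "k \<in> F \<Longrightarrow> u \<in> E \<Longrightarrow> s \<in> square_span F E \<Longrightarrow> k * u^2 + s \<in> square_span F E"

lemma square_span_add:
  "x \<in> square_span F E \<Longrightarrow> y \<in> square_span F E \<Longrightarrow> x + y \<in> square_span F E"
  by (induction x rule: square_span.induct) (auto simp: add.assoc intro: square_span.intros)

lemma square_span_square: "k \<in> F \<Longrightarrow> u \<in> E \<Longrightarrow> k * u^2 \<in> square_span F E"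
  using square_span.add_square[OF _ _ square_span.zero] by fastforce

lemma square_span_scale:
  assumes F: "is_subfield F" and k: "k \<in> F" and x: "x \<in> square_span F E"
  shows "k * x \<in> square_span F E"
  using x
proof (induction x rule: square_span.induct)
  case (add_square k' u s)
  have "k * (k' * u^2 + s) = (k * k') * u^2 + k * s" by (simp add: algebra_simps)
  then show ?case
    using add_square is_subfield_mult[OF F k] by (metis square_span.add_square)
qed (simp add: square_span.zero)

lemma square_span_mult_square:
  assumes E: "is_subfield E" and u: "u \<in> E" and y: "y \<in> square_span F E"
  shows "u^2 * y \<in> square_span F E"
  using y
proof (induction y rule: square_span.induct)
  case (add_square k v s)
  have "u^2 * (k * v^2 + s) = k * (u * v)^2 + u^2 * s" by (simp add: algebra_simps power_mult_distrib)
  then show ?case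
    using add_square is_subfield_mult[OF E u] by (metis square_span.add_square)
qed (simp add: square_span.zero)

lemma square_span_mult:
  assumes F: "is_subfield F" and E: "is_subfield E"
    and x: "x \<in> square_span F E" and y: "y \<in> square_span F E"
  shows "x * y \<in> square_span F E"
  using x
proof (induction x rule: square_span.induct)
  case (add_square k u s)
  have "u^2 * y \<in> square_span F E" by (rule square_span_mult_square[OF E add_square(2) y])
  then have "k * (u^2 * y) + s * y \<in> square_span F E"
    using add_square(1,4) square_span_add square_span_scale[OF F] by blast
  moreover have "(k * u^2 + s) * y = k * (u^2 * y) + s * y" by (simp add: algebra_simps)
  ultimately show ?case by simp
qed (simp add: square_span.zero)

lemma subset_square_span: "is_subfield E \<Longrightarrow> F \<subseteq> square_span F E"
  using square_span_square[of _ F 1 E] is_subfield_one by fastforce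

lemma square_mem_square_span: "is_subfield F \<Longrightarrow> u \<in> E \<Longrightarrow> u^2 \<in> square_span F E"
  using square_span_square[OF is_subfield_one, of F u E] by simp

lemma square_span_mono: "F \<subseteq> F' \<Longrightarrow> square_span F E \<subseteq> square_span F' E"
proof
  fix x assume "F \<subseteq> F'" and "x \<in> square_span F E"
  from this(2) show "x \<in> square_span F' E"
    by (induction x rule: square_span.induct) (use \<open>F \<subseteq> F'\<close> in \<open>auto intro: square_span.intros\<close>)
qed

lemma square_span_least:
  assumes "is_subfield M" "F \<subseteq> M" "\<forall>u\<in>E. u^2 \<in> M"
  shows "square_span F E \<subseteq> M"
proof
  fix x assume "x \<in> square_span F E" then show "x \<in> M"
    by (induction x rule: square_span.induct)
      (use assms in \<open>auto intro!: is_subfield_add is_subfield_mult is_subfield_zero\<close>)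
qed

lemma square_span_subset: "is_subfield E \<Longrightarrow> F \<subseteq> E \<Longrightarrow> square_span F E \<subseteq> E"
  by (rule square_span_least) (auto intro: is_subfield_power)

lemma square_span_is_subfield:
  assumes F: "is_subfield F" and E: "is_subfield E" and FE: "F \<subseteq> E"
  shows "is_subfield (square_span F E)"
  unfolding is_subfield_def
proof (intro conjI ballI impI)
  show "0 \<in> square_span F E" by (rule square_span.zero)
  show "1 \<in> square_span F E" using subset_square_span[OF E] is_subfield_one[OF F] by auto
  fix x y assume x: "x \<in> square_span F E" and y: "y \<in> square_span F E"
  show "x + y \<in> square_span F E" by (rule square_span_add[OF x y])
  show "x * y \<in> square_span F E" by (rule square_span_mult[OF F E x y])
  have "-1 \<in> F" using is_subfield_diff[OF F is_subfield_zero[OF F] is_subfield_one[OF F]] by simp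
  then have "(-1) * y \<in> square_span F E" by (rule square_span_scale[OF F _ y])
  then show "x - y \<in> square_span F E" using square_span_add[OF x] by fastforce
next
  fix x assume x: "x \<in> square_span F E" and "x \<noteq> 0"
  have "x \<in> E" using x square_span_subset[OF E FE] by blast
  then have "(inverse x)^2 * x \<in> square_span F E"
    using square_span_mult_square[OF E is_subfield_inverse[OF E] x] by blast
  moreover have "(inverse x)^2 * x = inverse x" using \<open>x \<noteq> 0\<close> by (simp add: power2_eq_square)
  ultimately show "inverse x \<in> square_span F E" by simp
qed

lemma square_span_trans:
  assumes F: "is_subfield F" and E: "is_subfield E" and FE: "F \<subseteq> E"
    and K: "is_subfield K" and KS: "K \<subseteq> square_span F E"
  shows "square_span K E \<subseteq> square_span F E"
proof -
  have "square_span K E \<subseteq> square_span (square_span F E) E" by (rule square_span_mono[OF KS])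
  also have "\<dots> \<subseteq> square_span F E"
    using square_mem_square_span[OF F] subset_square_span[OF E]
    by (intro square_span_least square_span_is_subfield[OF F E FE]) auto
  finally show ?thesis .
qed

lemma D_ts_subset_square_span:
  assumes "\<forall>i<n. a i \<in> F"
  shows "D_ts E n a \<subseteq> square_span F E"
proof
  fix c assume "c \<in> D_ts E n a"
  then obtain x where x: "\<forall>i<n. x i \<in> E" "c = (\<Sum>i<n. a i * (x i)^2)"
    unfolding D_ts_def by auto
  have "(\<Sum>i<m. a i * (x i)^2) \<in> square_span F E" if "m \<le> n" for m
    using that
  proof (induction m)
    case (Suc m)
    then have "a m * (x m)^2 + (\<Sum>i<m. a i * (x i)^2) \<in> square_span F E"
      using assms x(1) by (intro square_span.add_square) auto
    then show ?case by (simp add: add.commute)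
  qed (simp add: square_span.zero)
  then show "c \<in> square_span F E" using x(2) by blast
qed

lemma char2_separable_elem_in_square_span:
  assumes two: "(2::'a::field) = 0" and F: "is_subfield F" and E: "is_subfield E" and FE: "F \<subseteq> E"
    and zE: "z \<in> E" and sep: "separable_elem F (z::'a)"
  shows "z \<in> square_span F E"
proof -
  obtain p where mp: "is_min_poly F z p" and cop: "coprime p (pderiv p)"
    using sep unfolding separable_elem_def separable_poly_def by auto
  have pF: "poly_over F p" and pz: "poly p z = 0"
    using mp unfolding is_min_poly_def by auto
  have p'0: "pderiv p \<noteq> 0"
  proof
    assume "pderiv p = 0"
    then have "is_unit p" using cop by simp
    then show False using is_min_poly_nonconstant[OF mp] by (simp add: is_unit_iff_degree)
  qed
  have deg: "degree (pderiv p) < degree p"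
    using degree_pderiv_less is_min_poly_nonconstant(2)[OF mp] .
  define d where "d = poly (pderiv p) z"
  define g where "g = (\<Sum>i<Suc (degree p). coeff p (2*i) * (z^i)^2)"
  have "d \<noteq> 0"
  proof
    assume "d = 0"
    then have "degree p \<le> degree (pderiv p)"
      using mp poly_over_pderiv[OF F pF] p'0 unfolding is_min_poly_def d_def by blast
    with deg show False by simp
  qed
  moreover have "g + z * d = 0"
    using char2_poly_even_odd[OF two, of p z] pz by (simp add: g_def d_def)
  ultimately have z_eq: "z = g / d"
    using char2_uminus[OF two, of g] by (simp add: eq_divide_eq add_eq_0_iff)
  define S where "S = square_span F E"
  have S: "is_subfield S" unfolding S_def by (rule square_span_is_subfield[OF F E FE])
  have "coeff p j * (z^i)^2 \<in> S" for i j
    unfolding S_def using pF zE is_subfield_power[OF E] square_span_square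
    unfolding poly_over_def by blast
  then have "g \<in> S" "d \<in> S"
    unfolding g_def d_def char2_poly_pderiv[OF two]
    by (auto intro!: is_subfield_sum[OF S] simp del: sum.lessThan_Suc)
  then show ?thesis unfolding z_eq S_def[symmetric] by (rule is_subfield_divide[OF S])
qed

section \<open>Linear algebra over a subfield\<close>

text \<open>The linear algebra of HOL-Algebra (spans, independence, dimension) is applied inside
  the ambient field, viewed as a ring record.\<close>

definition ambient_ring :: "'a::field ring" where
  "ambient_ring = \<lparr>carrier = UNIV, monoid.mult = (*), one = 1, ring.zero = 0, add = (+)\<rparr>"

lemma ambient_ring_simps [simp]:
  "carrier ambient_ring = UNIV" "mult ambient_ring = (*)" "one ambient_ring = 1"
  "zero ambient_ring = 0" "add ambient_ring = (+)"
  by (auto simp: ambient_ring_def)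

lemma field_ambient_ring: "field (ambient_ring :: 'a::field ring)"
proof -
  have "\<exists>y. x + y = 0" for x :: 'a
    using add.right_inverse by blast
  moreover have "x \<noteq> 0 \<Longrightarrow> \<exists>y. x * y = 1" for x :: 'a
    by (rule exI[of _ "inverse x"]) auto
  ultimately show ?thesis
    unfolding ambient_ring_def using add.right_inverse
    by unfold_locales (auto simp: algebra_simps Units_def)
qed

interpretation R: field "ambient_ring :: 'a::field ring"
  by (rule field_ambient_ring)

lemma ambient_ring_a_inv [simp]: "a_inv ambient_ring x = - (x::'a::field)"
  by (rule R.minus_equality) auto

lemma ambient_ring_m_inv [simp]: "x \<noteq> 0 \<Longrightarrow> m_inv ambient_ring x = inverse (x::'a::field)"
  by (rule R.inv_char) auto

lemma subfield_ambient_ring: "is_subfield E \<Longrightarrow> subfield E (ambient_ring :: 'a::field ring)"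
  by (rule R.subfieldI', rule R.subringI) (auto simp: is_subfield_def)

lemma combine_eq_sum:
  "length Ks = length Us \<Longrightarrow> R.combine Ks Us = (\<Sum>j<length Us. Ks!j * (Us!j :: 'a::field))"
proof (induction Us arbitrary: Ks)
  case (Cons u Us)
  then obtain k Ks' where "Ks = k # Ks'" by (cases Ks) auto
  with Cons show ?case by (simp del: sum.lessThan_Suc add: sum.lessThan_Suc_shift)
qed simp

lemma mem_Span_iff_sum:
  assumes K: "is_subfield K"
  shows "x \<in> R.Span K Us \<longleftrightarrow>
    (\<exists>f. (\<forall>j<length Us. f j \<in> K) \<and> x = (\<Sum>j<length Us. f j * (Us!j :: 'a::field)))"
proof
  assume "x \<in> R.Span K Us"
  then obtain Ks where Ks: "set Ks \<subseteq> K" "length Ks = length Us" "x = R.combine Ks Us"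
    using R.Span_mem_iff_length_version[OF subfield_ambient_ring[OF K], of Us x] by auto
  then show "\<exists>f. (\<forall>j<length Us. f j \<in> K) \<and> x = (\<Sum>j<length Us. f j * Us!j)"
    using combine_eq_sum[OF Ks(2)] by (intro exI[of _ "\<lambda>j. Ks!j"]) (auto simp: nth_mem subsetD)
next
  assume "\<exists>f. (\<forall>j<length Us. f j \<in> K) \<and> x = (\<Sum>j<length Us. f j * Us!j)"
  then obtain f where f: "\<forall>j<length Us. f j \<in> K" "x = (\<Sum>j<length Us. f j * Us!j)" by auto
  define Ks where "Ks = map f [0..<length Us]"
  have "length Ks = length Us" "set Ks \<subseteq> K" "x = R.combine Ks Us"
    using f combine_eq_sum[of Ks Us] by (auto simp: Ks_def)
  then show "x \<in> R.Span K Us"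
    using R.Span_mem_iff_length_version[OF subfield_ambient_ring[OF K], of Us x] by auto
qed

lemma Span_subset_subfield:
  assumes E: "is_subfield E" and KE: "K \<subseteq> E" and K: "is_subfield K" and UE: "set Us \<subseteq> E"
  shows "R.Span K Us \<subseteq> E"
  using KE UE unfolding subset_iff[of "R.Span K Us"] mem_Span_iff_sum[OF K]
  by (auto intro!: is_subfield_sum[OF E] is_subfield_mult[OF E])

lemma mem_Span_self: "is_subfield K \<Longrightarrow> u \<in> set Us \<Longrightarrow> u \<in> R.Span K (Us :: 'a::field list)"
  using R.Span_base_incl[OF subfield_ambient_ring, of K Us] by auto

lemma Span_coordinates:
  assumes K: "is_subfield K" and "\<forall>i<n. x i \<in> R.Span K Us"
  obtains f where "\<forall>i<n. \<forall>j<length Us. f i j \<in> K"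
    "\<forall>i<n. x i = (\<Sum>j<length Us. f i j * (Us!j :: 'a::field))"
proof -
  have "\<forall>i. \<exists>g. i < n \<longrightarrow> (\<forall>j<length Us. g j \<in> K) \<and> x i = (\<Sum>j<length Us. g j * Us!j)"
    using assms(2) unfolding mem_Span_iff_sum[OF K] by blast
  from choice[OF this] show thesis using that by blast
qed

lemma Span_independent_sublist:
  assumes K: "is_subfield K"
  obtains Vs where "R.independent K Vs" "R.Span K Vs = R.Span K (Us :: 'a::field list)"
    "length Vs \<le> length Us" "length Vs = length Us \<Longrightarrow> Vs = Us"
proof -
  have K': "subfield K ambient_ring" by (rule subfield_ambient_ring[OF K])
  have "\<exists>Vs. R.independent K Vs \<and> R.Span K Vs = R.Span K Us \<and> length Vs \<le> length Us
      \<and> (length Vs = length Us \<longrightarrow> Vs = Us)"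
  proof (induction Us)
    case (Cons u Us)
    then obtain Vs where Vs: "R.independent K Vs" "R.Span K Vs = R.Span K Us"
      "length Vs \<le> length Us" "length Vs = length Us \<longrightarrow> Vs = Us" by auto
    show ?case
    proof (cases "u \<in> R.Span K Us")
      case True
      then have "R.Span K (u # Us) = R.Span K Us"
        using R.mono_Span_subset[OF K', of "u # Us" Us] R.Span_base_incl[OF K', of Us]
          R.mono_Span[OF K', of Us u]
        by auto
      then show ?thesis using Vs by (intro exI[of _ Vs]) auto
    next
      case False
      then have "R.independent K (u # Vs)" using R.li_Cons[of u K Vs] Vs by simp
      then show ?thesis using Vs by (intro exI[of _ "u # Vs"]) auto
    qed
  qed simp
  then show thesis using that by blast
qed

lemma independent_if_Span_length_dimension:
  assumes K: "is_subfield K" and d: "R.dimension (length Ws) K (R.Span K Ws)"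
  shows "R.independent K (Ws :: 'a::field list)"
proof -
  have K': "subfield K ambient_ring" by (rule subfield_ambient_ring[OF K])
  obtain Vs where Vs: "R.independent K Vs" "R.Span K Vs = R.Span K Ws"
    "length Vs = length Ws \<Longrightarrow> Vs = Ws"
    using Span_independent_sublist[OF K] by blast
  have "R.dimension (length Vs) K (R.Span K Ws)" using R.dimensionI[OF K' Vs(1,2)] .
  then show ?thesis using R.dimension_is_inj[OF K' _ d] Vs by simp
qed

lemma independent_coefficients_unique:
  assumes K: "is_subfield K" and ind: "R.independent K Ws"
    and f: "\<forall>j<length Ws. f j \<in> K" and g: "\<forall>j<length Ws. g j \<in> K"
    and eq: "(\<Sum>j<length Ws. f j * Ws!j) = (\<Sum>j<length Ws. g j * (Ws!j :: 'a::field))"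
  shows "\<forall>j<length Ws. f j = g j"
proof -
  define x where "x = (\<Sum>j<length Ws. f j * Ws!j)"
  define Kf where "Kf = map f [0..<length Ws]"
  define Kg where "Kg = map g [0..<length Ws]"
  have "x \<in> R.Span K Ws" unfolding x_def using mem_Span_iff_sum[OF K] f by blast
  moreover have "set Kf \<subseteq> K \<and> length Kf = length Ws \<and> x = R.combine Kf Ws"
    using f combine_eq_sum[of Kf Ws] by (auto simp: Kf_def x_def)
  moreover have "set Kg \<subseteq> K \<and> length Kg = length Ws \<and> x = R.combine Kg Ws"
    using g combine_eq_sum[of Kg Ws] eq by (auto simp: Kg_def x_def)
  ultimately have "Kf = Kg"
    using R.unique_decomposition[OF subfield_ambient_ring[OF K] ind] by blast
  then show ?thesis by (simp add: Kf_def Kg_def)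
qed

lemma finite_ext_finite_dimension:
  assumes "finite_ext L F"
  shows "R.finite_dimension F (L :: 'a::field set)"
proof -
  have F: "is_subfield F" and L: "is_subfield L" and FL: "F \<subseteq> L"
    using assms unfolding finite_ext_def by auto
  obtain B where B: "finite B" "B \<subseteq> L" "\<forall>x\<in>L. \<exists>c. (\<forall>b\<in>B. c b \<in> F) \<and> x = (\<Sum>b\<in>B. c b * b)"
    using assms unfolding finite_ext_def by auto
  obtain Bs where Bs: "set Bs = B" "distinct Bs" using finite_distinct_list[OF B(1)] by auto
  have "L \<subseteq> R.Span F Bs"
  proof
    fix x assume "x \<in> L"
    then obtain c where c: "\<forall>b\<in>B. c b \<in> F" "x = (\<Sum>b\<in>B. c b * b)" using B(3) by auto
    have "x = (\<Sum>j<length Bs. c (Bs!j) * Bs!j)"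
      unfolding c(2) Bs(1)[symmetric] by (simp add: sum_list_distinct_conv_sum_set[symmetric] Bs(2)
          sum_list_sum_nth atLeast0LessThan)
    then show "x \<in> R.Span F Bs"
      unfolding mem_Span_iff_sum[OF F] using c(1) Bs(1) by (intro exI[of _ "\<lambda>j. c (Bs!j)"]) auto
  qed
  then have "R.Span F Bs = L" using Span_subset_subfield[OF L FL F] Bs B by blast
  then show ?thesis using R.Span_finite_dimension[OF subfield_ambient_ring[OF F], of Bs] by simp
qed

lemma finite_dimension_intermediate:
  assumes K: "is_subfield K" and M: "is_subfield M" and E: "is_subfield E" and L: "is_subfield L"
    and KM: "K \<subseteq> M" and ME: "M \<subseteq> E" and EL: "E \<subseteq> L" and fd: "R.finite_dimension K L"
  shows "R.finite_dimension M E"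
proof -
  have K': "subfield K ambient_ring" and M': "subfield M ambient_ring"
    using K M by (simp_all add: subfield_ambient_ring)
  obtain d where "R.dimension d K L" using fd by auto
  then obtain Bs where Bs: "R.Span K Bs = L"
    using R.exists_base[OF K'] by blast
  have "R.Span M Bs = L"
  proof
    show "L \<subseteq> R.Span M Bs"
    proof
      fix t assume "t \<in> L"
      then obtain f where "\<forall>j<length Bs. f j \<in> K" "t = (\<Sum>j<length Bs. f j * Bs!j)"
        using Bs mem_Span_iff_sum[OF K] by blast
      then show "t \<in> R.Span M Bs" unfolding mem_Span_iff_sum[OF M] using KM by blast
    qed
    show "R.Span M Bs \<subseteq> L"
      using KM ME EL Bs mem_Span_self[OF K] by (intro Span_subset_subfield[OF L _ M]) auto
  qed
  then have "R.finite_dimension M L" using R.Span_finite_dimension[OF M', of Bs] by simp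
  moreover have "subalgebra M E ambient_ring"
  proof (rule subalgebra.intro)
    show "subgroup E (add_monoid ambient_ring)"
      using subring.axioms(1) subfieldE(1)[OF subfield_ambient_ring[OF E]] by blast
    show "subalgebra_axioms M E ambient_ring"
      unfolding subalgebra_axioms_def using ME is_subfield_mult[OF E] by auto
  qed
  ultimately show ?thesis using R.subalbegra_incl_imp_finite_dimension[OF M'] EL by blast
qed

section \<open>Bases of squares\<close>

text \<open>Since (\<Sum> k_j u_j)^2 = \<Sum> k_j^2 u_j^2, the squares of a basis span K[E^2]; if this is E,
  they are a spanning list of the right length, hence independent.\<close>

lemma char2_squares_of_basis:
  assumes two: "(2::'a::field) = 0" and K: "is_subfield K" and E: "is_subfield E" and KE: "K \<subseteq> E"
    and E_sq: "E \<subseteq> square_span K E"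
    and ind: "R.independent K Us" and span: "R.Span K Us = (E :: 'a set)"
  shows "R.Span K (map (\<lambda>u. u^2) Us) = E" "R.independent K (map (\<lambda>u. u^2) Us)"
proof -
  define Ws where "Ws = map (\<lambda>u. u^2) Us"
  have UsE: "set Us \<subseteq> E" using span mem_Span_self[OF K] by blast
  have "square_span K E \<subseteq> R.Span K Ws"
  proof
    fix x assume "x \<in> square_span K E"
    then show "x \<in> R.Span K Ws"
    proof (induction x rule: square_span.induct)
      case zero
      show ?case
        unfolding mem_Span_iff_sum[OF K] by (intro exI[of _ "\<lambda>_. 0"]) (simp add: is_subfield_zero[OF K])
    next
      case (add_square k u s)
      obtain f where f: "\<forall>j<length Us. f j \<in> K" "u = (\<Sum>j<length Us. f j * Us!j)"
        using add_square(2) span mem_Span_iff_sum[OF K] by blast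
      obtain g where g: "\<forall>j<length Us. g j \<in> K" "s = (\<Sum>j<length Us. g j * Ws!j)"
        using add_square(4) mem_Span_iff_sum[OF K] by (auto simp: Ws_def)
      have "k * u^2 + s = (\<Sum>j<length Us. (k * (f j)^2 + g j) * Ws!j)"
        unfolding f(2) g(2) char2_power2_sum[OF two]
        by (simp add: Ws_def power_mult_distrib sum_distrib_left sum.distrib algebra_simps)
      moreover have "k * (f j)^2 + g j \<in> K" if "j < length Us" for j
        using that f(1) g(1) add_square(1)
        by (blast intro: is_subfield_add[OF K] is_subfield_mult[OF K] is_subfield_power[OF K])
      ultimately show ?case
        unfolding mem_Span_iff_sum[OF K] by (auto simp: Ws_def intro!: exI[of _ "\<lambda>j. k * (f j)^2 + g j"])
    qed
  qed
  moreover have "set Ws \<subseteq> E" using UsE is_subfield_power[OF E] by (auto simp: Ws_def)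
  ultimately show span_Ws: "R.Span K Ws = E"
    using E_sq Span_subset_subfield[OF E KE K] by blast
  have "R.dimension (length Ws) K (R.Span K Ws)"
    using span_Ws R.dimensionI[OF subfield_ambient_ring[OF K] ind] span by (simp add: Ws_def)
  then show "R.independent K Ws" by (rule independent_if_Span_length_dimension[OF K])
qed

lemma char2_mem_if_square_mem:
  assumes two: "(2::'a::field) = 0" and M: "is_subfield M" and E: "is_subfield E" and ME: "M \<subseteq> E"
    and fd: "R.finite_dimension M E" and E_sq: "E \<subseteq> square_span M E"
    and zE: "(z::'a) \<in> E" and z2: "z^2 \<in> M"
  shows "z \<in> M"
proof (rule ccontr)
  assume zM: "z \<notin> M"
  have M': "subfield M ambient_ring" by (rule subfield_ambient_ring[OF M])
  obtain d where d: "R.dimension d M E" using fd by auto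
  have "R.independent M [1]" by (rule R.li_Cons) auto
  moreover have "z \<notin> R.Span M [1]" using zM unfolding mem_Span_iff_sum[OF M] by auto
  ultimately have "R.independent M [z, 1]" by (simp add: R.li_Cons)
  moreover have "set [z, 1] \<subseteq> E" using zE is_subfield_one[OF E] by simp
  ultimately obtain Vs where Vs: "R.independent M (Vs @ [z, 1])" "R.Span M (Vs @ [z, 1]) = E"
    using R.complete_base[OF M' d] by blast
  have "R.independent M (map (\<lambda>u. u^2) Vs @ [z^2, 1])"
    using char2_squares_of_basis(2)[OF two M E ME E_sq Vs] by simp
  then have "z^2 \<notin> R.Span M [1]"
    using R.independent_split(1)[OF M'] R.independent_backwards(1) by blast
  moreover have "z^2 \<in> R.Span M [1]"
    unfolding mem_Span_iff_sum[OF M] using z2 by (intro exI[of _ "\<lambda>_. z^2"]) simp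
  ultimately show False by contradiction
qed

section \<open>Separability and F[E^2]\<close>

text \<open>The field F(y), realised as the values of rational functions over F at y.\<close>

definition poly_quotients :: "'a::field set \<Rightarrow> 'a \<Rightarrow> 'a set" where
  "poly_quotients F y =
    {poly r y / poly s y | r s. poly_over F r \<and> poly_over F s \<and> poly s y \<noteq> 0}"

lemma poly_quotients_is_subfield:
  assumes F: "is_subfield F" shows "is_subfield (poly_quotients F y)"
proof -
  have mem: "poly r y / poly s y \<in> poly_quotients F y"
    if "poly_over F r" "poly_over F s" "poly s y \<noteq> 0" for r s
    using that unfolding poly_quotients_def by blast
  have ops: "x1 + x2 \<in> poly_quotients F y \<and> x1 - x2 \<in> poly_quotients F y
      \<and> x1 * x2 \<in> poly_quotients F y"
    if X1: "x1 \<in> poly_quotients F y" and X2: "x2 \<in> poly_quotients F y" for x1 x2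
  proof -
    obtain r1 s1 where 1: "poly_over F r1" "poly_over F s1" "poly s1 y \<noteq> 0" "x1 = poly r1 y / poly s1 y"
      using X1 unfolding poly_quotients_def by blast
    obtain r2 s2 where 2: "poly_over F r2" "poly_over F s2" "poly s2 y \<noteq> 0" "x2 = poly r2 y / poly s2 y"
      using X2 unfolding poly_quotients_def by blast
    have "x1 + x2 = poly (r1 * s2 + r2 * s1) y / poly (s1 * s2) y"
      "x1 - x2 = poly (r1 * s2 - r2 * s1) y / poly (s1 * s2) y"
      "x1 * x2 = poly (r1 * r2) y / poly (s1 * s2) y"
      unfolding 1(4) 2(4) using 1(3) 2(3) by (simp_all add: add_frac_eq diff_frac_eq)
    moreover have "poly (s1 * s2) y \<noteq> 0" using 1(3) 2(3) by simp
    ultimately show ?thesis using 1 2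
      by (simp only:) (intro conjI mem poly_over_add[OF F] poly_over_diff[OF F] poly_over_mult[OF F])
  qed
  have inv: "inverse x \<in> poly_quotients F y" if X: "x \<in> poly_quotients F y" for x
  proof -
    obtain r s where 1: "poly_over F r" "poly_over F s" "poly s y \<noteq> 0" "x = poly r y / poly s y"
      using X unfolding poly_quotients_def by blast
    show ?thesis
    proof (cases "poly r y = 0")
      case False
      then show ?thesis using mem[OF 1(2,1)] 1(4) by simp
    qed (use mem[OF poly_over_0[OF F] poly_over_1[OF F]] 1 in simp)
  qed
  show ?thesis unfolding is_subfield_def
    using mem[OF poly_over_0[OF F] poly_over_1[OF F]] mem[OF poly_over_1[OF F] poly_over_1[OF F]] ops inv
    by auto
qed

lemma subset_poly_quotients: "is_subfield F \<Longrightarrow> F \<subseteq> poly_quotients F y"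
proof
  fix k assume "is_subfield F" "k \<in> F"
  then have "poly [:k:] y / poly 1 y \<in> poly_quotients F y"
    unfolding poly_quotients_def using poly_over_const poly_over_1 by fastforce
  then show "k \<in> poly_quotients F y" by simp
qed

lemma mem_poly_quotients:
  assumes F: "is_subfield F" shows "y \<in> poly_quotients F y"
proof -
  have "poly_over F [:0, 1:]"
    by (intro poly_over_pCons[OF F] poly_over_const[OF F] is_subfield_zero[OF F] is_subfield_one[OF F])
  then have "poly [:0, 1:] y / poly 1 y \<in> poly_quotients F y"
    unfolding poly_quotients_def using poly_over_1[OF F] by fastforce
  then show ?thesis by simp
qed

lemma poly_quotients_subset:
  assumes E: "is_subfield E" and FE: "F \<subseteq> E" and yE: "y \<in> E"
  shows "poly_quotients F y \<subseteq> E"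
  unfolding poly_quotients_def using poly_in_subfield[OF E FE _ yE] is_subfield_divide[OF E] by auto

lemma char2_separable_elem_if_mem_poly_quotients_square:
  assumes two: "(2::'a::field) = 0" and F: "is_subfield F" and mp: "is_min_poly F z p"
    and z: "(z::'a) \<in> poly_quotients F (z^2)"
  shows "separable_elem F z"
proof -
  obtain r s where rs: "poly_over F r" "poly_over F s" "poly s (z^2) \<noteq> 0"
    "z = poly r (z^2) / poly s (z^2)"
    using z unfolding poly_quotients_def by blast
  have pz: "poly p z = 0" using mp unfolding is_min_poly_def by auto
  have zs: "poly r (z^2) = z * poly s (z^2)"
    using rs(4)[symmetric] rs(3) by (simp add: divide_eq_eq)
  have "pderiv p \<noteq> 0"
  proof
    assume p'0: "pderiv p = 0"
    define X2 where "X2 = [:0, 0, 1::'a:]"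
    define T where "T = [:0, 1:] * pcompose s X2 - pcompose r X2"
    have X2F: "poly_over F X2" and XF: "poly_over F [:0, 1:]"
      unfolding X2_def using F
      by (simp_all add: poly_over_pCons poly_over_const is_subfield_zero is_subfield_one)
    have pX2: "poly X2 z = z^2" unfolding X2_def by (simp add: power2_eq_square)
    have "poly_over F T"
      unfolding T_def using F X2F XF rs(1,2)
      by (intro poly_over_diff poly_over_mult poly_over_pcompose) auto
    moreover have "poly T z = 0" by (simp add: T_def poly_pcompose pX2 zs)
    ultimately have "p dvd T" by (rule is_min_poly_dvd[OF F mp])
    then obtain h where "T = p * h" by (elim dvdE)
    then have "pderiv T = p * pderiv h" by (simp add: pderiv_mult p'0)
    moreover have "pderiv T = pcompose s X2"
      unfolding T_def X2_def using char2_pderiv_pcompose_X2[OF two]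
      by (simp add: pderiv_diff pderiv_mult pderiv_pCons)
    ultimately have "poly (pcompose s X2) z = 0" using pz by simp
    with rs(3) show False by (simp add: poly_pcompose pX2)
  qed
  then show ?thesis by (rule separable_elem_if_pderiv_nonzero[OF F mp])
qed

lemma algebraic_if_finite_dimension:
  assumes F: "is_subfield F" and L: "is_subfield L" and fd: "R.finite_dimension F L"
    and zL: "z \<in> L"
  obtains q where "poly_over F q" "q \<noteq> 0" "poly q z = 0"
proof -
  have F': "subfield F ambient_ring" by (rule subfield_ambient_ring[OF F])
  obtain n where d: "R.dimension n F L" using fd by auto
  define Zs where "Zs = map (\<lambda>i. z^i) [0..<Suc n]"
  have "set Zs \<subseteq> L" unfolding Zs_def using zL is_subfield_power[OF L] by auto
  then have "\<not> R.independent F Zs"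
    using R.independent_length_le_dimension[OF F' d, of Zs] by (auto simp: Zs_def)
  then obtain Ks where Ks: "length Ks = length Zs" "R.combine Ks Zs = 0" "set Ks \<subseteq> F"
    "set Ks \<noteq> {0}"
    using R.dependent_imp_non_trivial_combine[OF F', of Zs] by auto
  show thesis
  proof
    show "poly_over F (Poly Ks)" using poly_over_Poly[OF F Ks(3)] .
    show "Poly Ks \<noteq> 0"
    proof
      assume "Poly Ks = 0"
      then obtain m where "Ks = replicate m 0" unfolding Poly_eq_0 by blast
      moreover have "Ks \<noteq> []" using Ks(1) by (auto simp: Zs_def)
      ultimately show False using Ks(4) by (cases m) auto
    qed
    have "poly (Poly Ks) z = (\<Sum>j<length Zs. Ks!j * Zs!j)"
      unfolding poly_Poly_eq_sum Ks(1) by (intro sum.cong) (auto simp: Zs_def simp del: upt_Suc)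
    then show "poly (Poly Ks) z = 0" using combine_eq_sum[OF Ks(1)] Ks(2) by simp
  qed
qed

lemma char2_separable_elem_if_subset_square_span:
  assumes two: "(2::'a::field) = 0" and F: "is_subfield F" and E: "is_subfield E"
    and L: "is_subfield L" and FE: "F \<subseteq> E" and EL: "E \<subseteq> L" and fd: "R.finite_dimension F L"
    and E_sq: "E \<subseteq> square_span F E" and zE: "(z::'a) \<in> E"
  shows "separable_elem F z"
proof -
  define M where "M = poly_quotients F (z^2)"
  have M: "is_subfield M" and FM: "F \<subseteq> M" and z2M: "z^2 \<in> M"
    unfolding M_def
    by (rule poly_quotients_is_subfield[OF F], rule subset_poly_quotients[OF F], rule mem_poly_quotients[OF F])
  have ME: "M \<subseteq> E"
    unfolding M_def using zE is_subfield_power[OF E] by (intro poly_quotients_subset[OF E FE])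
  have "z \<in> M"
  proof (rule char2_mem_if_square_mem[OF two M E ME _ _ zE z2M])
    show "R.finite_dimension M E" by (rule finite_dimension_intermediate[OF F M E L FM ME EL fd])
    show "E \<subseteq> square_span M E" using E_sq square_span_mono[OF FM] by blast
  qed
  moreover obtain q where "poly_over F q" "q \<noteq> 0" "poly q z = 0"
    using algebraic_if_finite_dimension[OF F L fd] zE EL by blast
  then obtain p where "is_min_poly F z p" by (rule is_min_poly_exists[OF F])
  ultimately show ?thesis
    using char2_separable_elem_if_mem_poly_quotients_square[OF two F] unfolding M_def by blast
qed

lemma char2_separable_ext_iff_subset_square_span:
  assumes two: "(2::'a::field) = 0" and F: "is_subfield F" and E: "is_subfield E"
    and L: "is_subfield L" and FE: "F \<subseteq> E" and EL: "E \<subseteq> L" and fd: "R.finite_dimension F L"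
  shows "separable_ext E F \<longleftrightarrow> E \<subseteq> square_span F (E :: 'a set)"
  using char2_separable_elem_in_square_span[OF two F E FE]
    char2_separable_elem_if_subset_square_span[OF two F E L FE EL fd]
  unfolding separable_ext_def by blast

section \<open>Values of a totally singular form\<close>

lemma adjoin_subset_square_span_if_D_ts:
  assumes F: "is_subfield F" and E: "is_subfield E" and FE: "F \<subseteq> E"
    and coeffs: "\<forall>i<n. a i \<in> F" and c: "c \<in> F" "c \<noteq> 0" and cl: "c * lam \<in> D_ts E n a"
  shows "adjoin F lam \<subseteq> square_span F E"
proof -
  have "inverse c * (c * lam) \<in> square_span F E"
    using cl D_ts_subset_square_span[OF coeffs]
    by (intro square_span_scale[OF F is_subfield_inverse[OF F c(1)]]) blast
  then have "lam \<in> square_span F E" using c(2) by (simp add: mult.assoc[symmetric])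
  then show ?thesis
    by (intro adjoin_least square_span_is_subfield[OF F E FE] subset_square_span[OF E])
qed

lemma D_ts_if_coordinates:
  assumes "\<forall>i<n. \<forall>j<m. f i j \<in> F" and "\<forall>i<n. x i = (\<Sum>j<m. f i j * u j)"
    and "\<exists>i<n. x i \<noteq> 0" and "l < m"
    and "\<forall>j<m. (\<Sum>i<n. a i * (f i j)^2) = (if j = l then c else 0)"
  shows "c \<in> D_ts F n a"
proof -
  have nonzero: "\<exists>i<n. \<exists>j<m. f i j \<noteq> 0"
  proof -
    obtain i where i: "i < n" "x i \<noteq> 0" using assms(3) by blast
    have "\<exists>j<m. f i j \<noteq> 0"
    proof (rule ccontr)
      assume "\<not> (\<exists>j<m. f i j \<noteq> 0)"
      then have "x i = 0" using assms(2) i(1) by simp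
      with i(2) show False ..
    qed
    with i(1) show ?thesis by blast
  qed
  obtain j where j: "j < m" "\<exists>i<n. f i j \<noteq> 0" "c = (\<Sum>i<n. a i * (f i j)^2)"
  proof (cases "c = 0")
    case False
    \<comment> \<open>column l represents c, and it is nonzero since c is\<close>
    have c_eq: "c = (\<Sum>i<n. a i * (f i l)^2)" using assms(4,5) by simp
    moreover have "\<exists>i<n. f i l \<noteq> 0"
    proof (rule ccontr)
      assume "\<not> (\<exists>i<n. f i l \<noteq> 0)"
      then have "(\<Sum>i<n. a i * (f i l)^2) = 0" by simp
      with c_eq False show False by simp
    qed
    ultimately show thesis using that assms(4) by blast
  next
    case True
    \<comment> \<open>every column represents c = 0; take a nonzero one\<close>
    obtain i j where "i < n" "j < m" "f i j \<noteq> 0" using nonzero by blast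
    moreover have "c = (\<Sum>i<n. a i * (f i j)^2)" using assms(5) True \<open>j < m\<close> by simp
    ultimately show thesis using that by blast
  qed
  then show ?thesis
    unfolding D_ts_def using assms(1) by (intro CollectI exI[of _ "\<lambda>i. f i j"]) auto
qed

lemma char2_D_ts_descends:
  assumes two: "(2::'a::field) = 0" and F: "is_subfield F" and L: "is_subfield L" and FL: "F \<subseteq> L"
    and fd: "R.finite_dimension F L" and L_sq: "L \<subseteq> square_span F L"
    and coeffs: "\<forall>i<n. a i \<in> F" and cF: "(c::'a) \<in> F" and cL: "c \<in> D_ts L n a"
  shows "c \<in> D_ts F n a"
proof -
  have F': "subfield F ambient_ring" by (rule subfield_ambient_ring[OF F])
  obtain d where d: "R.dimension d F L" using fd by auto
  have "R.independent F [1]" by (rule R.li_Cons) auto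
  moreover have "set [1] \<subseteq> L" using is_subfield_one[OF L] by simp
  ultimately obtain Vs where Vs: "R.independent F (Vs @ [1])" "R.Span F (Vs @ [1]) = L"
    using R.complete_base[OF F' d] by blast
  define Us where "Us = Vs @ [1]"
  define l where "l = length Vs"
  define Ws where "Ws = map (\<lambda>u. u^2) Us"
  have len: "length Us = Suc l" "length Ws = Suc l" by (simp_all add: Us_def Ws_def l_def)
  have indW: "R.independent F Ws"
    using char2_squares_of_basis(2)[OF two F L FL L_sq Vs] by (simp add: Ws_def Us_def)
  obtain x where x: "\<forall>i<n. x i \<in> L" "\<exists>i<n. x i \<noteq> 0" "c = (\<Sum>i<n. a i * (x i)^2)"
    using cL unfolding D_ts_def by auto
  obtain f where f: "\<forall>i<n. \<forall>j<Suc l. f i j \<in> F" and x_eq: "\<forall>i<n. x i = (\<Sum>j<Suc l. f i j * Us!j)"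
    using Span_coordinates[OF F, of n x Us] x(1) Vs(2) unfolding Us_def[symmetric] len(1) by blast
  define G where "G j = (\<Sum>i<n. a i * (f i j)^2)" for j
  define H where "H j = (if j = l then c else 0)" for j
  have Ws_nth: "Ws!j = (Us!j)^2" if "j < Suc l" for j using that len by (simp add: Ws_def)
  have eq: "(\<Sum>j<length Ws. G j * Ws!j) = (\<Sum>j<length Ws. H j * Ws!j)"
  proof -
    have "(\<Sum>j<length Ws. G j * Ws!j) = (\<Sum>j<Suc l. G j * (Us!j)^2)"
      unfolding len(2) by (intro sum.cong refl) (simp add: Ws_nth)
    also have "\<dots> = c"
      using char2_sum_squares_expand[OF two x_eq] x(3) by (simp only: G_def)
    also have "\<dots> = (\<Sum>j<length Ws. H j * Ws!j)"
      unfolding len(2) H_def by (simp add: if_distrib Ws_nth Us_def l_def nth_append)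
    finally show ?thesis .
  qed
  have GF: "\<forall>j<length Ws. G j \<in> F" and HF: "\<forall>j<length Ws. H j \<in> F"
    using coeffs f cF is_subfield_zero[OF F] len unfolding G_def H_def
    by (auto intro!: is_subfield_sum[OF F] is_subfield_mult[OF F] is_subfield_power[OF F]
        simp del: sum.lessThan_Suc)
  have GH: "\<forall>j<length Ws. G j = H j"
    by (rule independent_coefficients_unique[OF F indW GF HF eq])
  show ?thesis
    by (rule D_ts_if_coordinates[OF f x_eq x(2) lessI]) (use GH len in \<open>simp add: G_def H_def\<close>)
qed

theorem proposition4p1:
  fixes F L :: "'a::field set" and n :: nat and a :: "nat \<Rightarrow> 'a"
    and c lam :: 'a
  assumes char2: "CHAR('a) = 2"
    and coeffs: "\<forall>i<n. a i \<in> F"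
    and nonzero: "\<exists>i<n. a i \<noteq> 0"
    and fin: "finite_ext L F"
    and cF: "c \<in> F"
    and hlam: "lam \<in> L - F"
  shows "(separable_ext L F \<and> c \<in> D_ts L n a \<longrightarrow> c \<in> D_ts F n a)
    \<and> (c \<noteq> 0 \<and> c * lam \<in> D_ts (adjoin F lam) n a \<longrightarrow> separable_ext (adjoin F lam) F)
    \<and> (c \<noteq> 0 \<and> c * lam \<in> D_ts L n a \<longrightarrow>
         separable_ext (adjoin F lam) F \<or> \<not> separable_ext L (adjoin F lam))"
proof -
  have two: "(2::'a) = 0" using of_nat_CHAR[where 'a='a] char2 by simp
  have F: "is_subfield F" and L: "is_subfield L" and FL: "F \<subseteq> L"
    and fd: "R.finite_dimension F L"
    using fin finite_ext_finite_dimension unfolding finite_ext_def by auto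
  define K where "K = adjoin F lam"
  have K: "is_subfield K" unfolding K_def by (rule adjoin_is_subfield)
  have FK: "F \<subseteq> K" unfolding K_def by (rule subset_adjoin)
  have KL: "K \<subseteq> L" unfolding K_def using hlam by (intro adjoin_least[OF L FL]) auto
  note separable_F = char2_separable_ext_iff_subset_square_span[OF two F _ L _ _ fd]
  show ?thesis
    unfolding K_def[symmetric]
  proof (intro conjI impI)
    assume "separable_ext L F \<and> c \<in> D_ts L n a"
    then show "c \<in> D_ts F n a"
      using char2_D_ts_descends[OF two F L FL fd _ coeffs cF] separable_F[OF L FL order_refl] by blast
  next
    assume "c \<noteq> 0 \<and> c * lam \<in> D_ts K n a"
    then have "K \<subseteq> square_span F K"
      using adjoin_subset_square_span_if_D_ts[OF F K FK coeffs cF] unfolding K_def by blast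
    then show "separable_ext K F" using separable_F[OF K FK KL] by blast
  next
    assume "c \<noteq> 0 \<and> c * lam \<in> D_ts L n a"
    then have "K \<subseteq> square_span F L"
      using adjoin_subset_square_span_if_D_ts[OF F L FL coeffs cF] unfolding K_def by blast
    moreover have "separable_ext L K \<longleftrightarrow> L \<subseteq> square_span K L"
      using char2_separable_ext_iff_subset_square_span[OF two K L L KL order_refl]
        finite_dimension_intermediate[OF F K L L FK KL order_refl fd] by blast
    ultimately have "separable_ext L K \<longrightarrow> separable_ext L F"
      using square_span_trans[OF F L FL K] separable_F[OF L FL order_refl] by blast
    with KL show "separable_ext K F \<or> \<not> separable_ext L K"
      unfolding separable_ext_def by blast
  qed
qed

end
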